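(* In the standing setting, with $\mathbf K_1,\mathbf K_2$ constant symmetric positive definite and the control law $\mathbf u(t)=-(\mathbf I_3+\mathbf K_2\mathbf K_1)\mathbf z_1(t)-(\mathbf K_1+\mathbf K_2)\mathbf z_2(t)-\mathbf f_a(t,\mathbf z_1(t))$, let $t_s>0$, let $$\mathbf X=\begin{bmatrix}\mathbf I_3+\mathbf K_1\mathbf K_1 & \mathbf K_1\\ \mathbf K_1&\mathbf I_3\end{bmatrix},\qquad r=\min_{j=1,\dots,P,\ t\in[0,t_s]}\|\mathbf w_j(t)\|,$$ and define the open ellipsoid $\mathcal E=\{\mathbf y\in\mathbb R^6:\mathbf y^T\mathbf X\mathbf y<\lambda_{\min}(\mathbf X)r^2\}$. Then $\mathcal E\subset\mathcal D(t)$ for all $t\in[0,t_s]$, every closed-loop trajectory with $\mathbf z_0\in\mathcal E$ remains in $\mathcal E$ for all $t\in[0,t_s]$, and there exist constants $c_1,c_2>0$ (depending only on $\mathbf K_1,\mathbf K_2$) such that $\|\mathbf z(t)\|\le c_1\|\mathbf z_0\|e^{-c_2t}$ for all $t\in[0,t_s]$ and all $\mathbf z_0\in\mathcal E$.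
   Context: Standing setting: Let $P\ge1$. For $j=1,\dots,P$ let $\mu_j>0$ and let $\mathbf r_j:[0,\infty)\to\mathbb R^3$ be continuously differentiable, with $\mathbf r_1\equiv\mathbf 0$. Let $\mathbf r^*:[0,\infty)\to\mathbb R^3$ be continuously differentiable (the target trajectory) with $\mathbf r^*(t)\neq\mathbf r_j(t)$ for all $t\ge0$ and all $j$, and set $\mathbf w_j(t):=\mathbf r_j(t)-\mathbf r^*(t)$. For $t\ge0$ and $\mathbf z_1\in\mathbb R^3$ with $\mathbf z_1\ne\mathbf w_j(t)$ for all $j$, define $$\mathbf f_a(t,\mathbf z_1)=\sum_{j=1}^P\mu_j\left(\frac{\mathbf w_j(t)-\mathbf z_1}{\|\mathbf w_j(t)-\mathbf z_1\|^3}-\frac{\mathbf w_j(t)}{\|\mathbf w_j(t)\|^3}\right).$$ The controlled error dynamics are $\dot{\mathbf z}_1(t)=\mathbf z_2(t)$, $\dot{\mathbf z}_2(t)=\mathbf f_a(t,\mathbf z_1(t))+\mathbf u(t)$, with state $\mathbf z=(\mathbf z_1,\mathbf z_2)\in\mathbb R^6$, control $\mathbf u(t)\in\mathbb R^3$, initial time $0$ and $\mathbf z_0:=\mathbf z(0)$. The vector field is defined on $\mathcal D(t)=\{(\mathbf x,\mathbf y)\in\mathbb R^6:\mathbf x\neq\mathbf w_j(t),\ j=1,\dots,P\}$. $\|\cdot\|$ is the Euclidean norm, $\lambda_{\min},\lambda_{\max}$ denote smallest/largest eigenvalues. Note $r>0$ since the $\mathbf w_j$ are continuous and nonvanishing on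 $[0,t_s]$. *)

theory Defs
  imports "HOL-Analysis.Analysis"
begin

text \<open>Vectors in R^3 are real^3; states in R^6 are pairs (z1, z2) :: (real^3) \<times> (real^3)
  (with the Euclidean product norm and inner product).\<close>

definition C1_on :: "real set \<Rightarrow> (real \<Rightarrow> real^3) \<Rightarrow> bool" where
  "C1_on S f \<longleftrightarrow> (\<exists>f'. continuous_on S f' \<and>
      (\<forall>t\<in>S. (f has_vector_derivative f' t) (at t within S)))"

definition sym_posdef :: "real^3^3 \<Rightarrow> bool" where
  "sym_posdef K \<longleftrightarrow> transpose K = K \<and> (\<forall>x. x \<noteq> 0 \<longrightarrow> x \<bullet> (K *v x) > 0)"

definition wv :: "(nat \<Rightarrow> real \<Rightarrow> real^3) \<Rightarrow> (real \<Rightarrow> real^3) \<Rightarrow> nat \<Rightarrow> real \<Rightarrow> real^3" where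
  "wv rr rs j t = rr j t - rs t"

definition fa :: "nat \<Rightarrow> (nat \<Rightarrow> real) \<Rightarrow> (nat \<Rightarrow> real \<Rightarrow> real^3) \<Rightarrow> (real \<Rightarrow> real^3)
                   \<Rightarrow> real \<Rightarrow> real^3 \<Rightarrow> real^3" where
  "fa P mu rr rs t z1 = (\<Sum>j\<in>{1..P}. mu j *\<^sub>R
      ((1 / norm (wv rr rs j t - z1) ^ 3) *\<^sub>R (wv rr rs j t - z1)
       - (1 / norm (wv rr rs j t) ^ 3) *\<^sub>R wv rr rs j t))"

definition Dom :: "nat \<Rightarrow> (nat \<Rightarrow> real \<Rightarrow> real^3) \<Rightarrow> (real \<Rightarrow> real^3) \<Rightarrow> real
                    \<Rightarrow> ((real^3) \<times> (real^3)) set" where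
  "Dom P rr rs t = {(x, y). \<forall>j\<in>{1..P}. x \<noteq> wv rr rs j t}"

definition ctrl :: "real^3^3 \<Rightarrow> real^3^3 \<Rightarrow> nat \<Rightarrow> (nat \<Rightarrow> real) \<Rightarrow> (nat \<Rightarrow> real \<Rightarrow> real^3)
                    \<Rightarrow> (real \<Rightarrow> real^3) \<Rightarrow> real \<Rightarrow> (real^3) \<times> (real^3) \<Rightarrow> real^3" where
  "ctrl K1 K2 P mu rr rs t z =
     - ((mat 1 + K2 ** K1) *v fst z) - ((K1 + K2) *v snd z) - fa P mu rr rs t (fst z)"

text \<open>The symmetric 6x6 matrix X = [[I + K1 K1, K1],[K1, I]] acting on R^6 = R^3 x R^3\<close>
definition Xmat :: "real^3^3 \<Rightarrow> (real^3) \<times> (real^3) \<Rightarrow> (real^3) \<times> (real^3)" where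
  "Xmat K1 y = ((mat 1 + K1 ** K1) *v fst y + K1 *v snd y, K1 *v fst y + snd y)"

definition lambda_min :: "((real^3) \<times> (real^3) \<Rightarrow> (real^3) \<times> (real^3)) \<Rightarrow> real" where
  "lambda_min A = Inf {l. \<exists>v. v \<noteq> 0 \<and> A v = l *\<^sub>R v}"

definition rmin :: "nat \<Rightarrow> (nat \<Rightarrow> real \<Rightarrow> real^3) \<Rightarrow> (real \<Rightarrow> real^3) \<Rightarrow> real \<Rightarrow> real" where
  "rmin P rr rs ts = Inf {norm (wv rr rs j t) | j t. j \<in> {1..P} \<and> t \<in> {0..ts}}"

definition Ell :: "real^3^3 \<Rightarrow> real \<Rightarrow> ((real^3) \<times> (real^3)) set" where
  "Ell K1 r = {y. y \<bullet> Xmat K1 y < lambda_min (Xmat K1) * r ^ 2}"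

end

theory Submission
  imports Defs
begin

text \<open>The control cancels f_a exactly, leaving the linear closed loop
  z1' = z2, z2' = -(I + K2 K1) z1 - (K1 + K2) z2.  With s = z2 + K1 z1 the quadratic form of X is
  V(z) = |z1|^2 + |s|^2, and along the closed loop V' = -2 (z1^T K1 z1 + s^T K2 s) \<le> -2 c V,
  where c > 0 bounds K1 and K2 from below.  Hence V(z(t)) \<le> V(z0) e^(-2ct): the ellipsoid E, a
  sublevel set of V, is invariant, and \<lambda>_min(X) |z|^2 \<le> V(z) \<le> B |z|^2 turns the decay of V
  into the exponential bound on |z|.  Points of E satisfy |z1| \<le> |z| < r \<le> |w_j(t)|, so E avoids
  the singularities of f_a.\<close>

lemma selfadjoint_psd_form_kernel:
  fixes B :: "'a::real_inner \<Rightarrow> 'a"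
  assumes lin: "linear B" and sym: "\<And>x y. B x \<bullet> y = x \<bullet> B y"
    and psd: "\<And>y. 0 \<le> y \<bullet> B y" and zero: "v \<bullet> B v = 0"
  shows "B v = 0"
  \<comment> \<open>Moving v a small step along -B v would make the form negative.\<close>
proof (rule ccontr)
  assume "B v \<noteq> 0"
  then have pos: "0 < B v \<bullet> B v" by simp
  define q where "q = B v \<bullet> B (B v)"
  define s where "s = (B v \<bullet> B v) / (q + 1)"
  have q: "0 \<le> q" using psd by (simp add: q_def)
  have s: "0 < s" using pos q by (simp add: s_def)
  have "s * q \<le> B v \<bullet> B v"
    using pos q by (simp add: s_def field_simps)
  then have "s * (s * q - 2 * (B v \<bullet> B v)) < 0"
    using s pos by (intro mult_pos_neg) linarith+
  also have "s * (s * q - 2 * (B v \<bullet> B v)) = (v - s *\<^sub>R B v) \<bullet> B (v - s *\<^sub>R B v)"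
    using zero sym[of v "B v"]
    by (simp add: linear_diff[OF lin] linear_scale[OF lin] inner_commute q_def algebra_simps
        power2_eq_square)
  finally show False using psd by (simp add: not_le[symmetric])
qed

lemma selfadjoint_Rayleigh_minimum:
  fixes A :: "'a::euclidean_space \<Rightarrow> 'a"
  assumes lin: "linear A" and sym: "\<And>x y. A x \<bullet> y = x \<bullet> A y"
  obtains v m where "norm v = 1" "A v = m *\<^sub>R v" "\<And>y. m * (norm y)\<^sup>2 \<le> y \<bullet> A y"
proof -
  have "continuous_on (sphere 0 1) (\<lambda>y. y \<bullet> A y)"
    using lin
    by (intro continuous_intros linear_continuous_on linear_conv_bounded_linear[THEN iffD1])
  moreover have "sphere (0::'a) 1 \<noteq> {}"
    using vector_choose_size[of 1] by auto
  ultimately obtain v where "v \<in> sphere 0 1"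
    and "\<And>y. y \<in> sphere 0 1 \<Longrightarrow> v \<bullet> A v \<le> y \<bullet> A y"
    using continuous_attains_inf[OF compact_sphere] by blast
  then have v: "norm v = 1" and min: "\<And>y. norm y = 1 \<Longrightarrow> v \<bullet> A v \<le> y \<bullet> A y"
    by auto
  define m where "m = v \<bullet> A v"
  have bound: "m * (norm y)\<^sup>2 \<le> y \<bullet> A y" for y
  proof (cases "y = 0")
    case True
    then show ?thesis using linear_0[OF lin] by simp
  next
    case False
    have "norm (y /\<^sub>R norm y) = 1"
      using False by simp
    then have "m \<le> (y /\<^sub>R norm y) \<bullet> A (y /\<^sub>R norm y)"
      unfolding m_def by (rule min)
    also have "\<dots> = (y \<bullet> A y) / (norm y)\<^sup>2"
      using False by (simp add: linear_scale[OF lin] field_simps power2_eq_square)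
    finally show ?thesis
      using False by (simp add: pos_le_divide_eq)
  qed
  have "A v - m *\<^sub>R v = 0"
  proof (rule selfadjoint_psd_form_kernel[where B = "\<lambda>y. A y - m *\<^sub>R y"])
    show "linear (\<lambda>y. A y - m *\<^sub>R y)"
      by (rule linearI) (simp_all add: linear_add[OF lin] linear_scale[OF lin] algebra_simps)
    show "(A x - m *\<^sub>R x) \<bullet> y = x \<bullet> (A y - m *\<^sub>R y)" for x y
      using sym[of x y] by (simp add: inner_diff_left inner_diff_right)
    show "0 \<le> y \<bullet> (A y - m *\<^sub>R y)" for y
      using bound[of y] by (simp add: inner_diff_right power2_norm_eq_inner)
    show "v \<bullet> (A v - m *\<^sub>R v) = 0"
      using v by (simp add: inner_diff_right m_def power2_norm_eq_inner[symmetric])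
  qed
  then have "A v = m *\<^sub>R v"
    by simp
  from v this bound show ?thesis
    by (rule that)
qed

lemma lambda_min_Rayleigh:
  fixes A :: "(real^3) \<times> (real^3) \<Rightarrow> (real^3) \<times> (real^3)"
  assumes lin: "linear A" and sym: "\<And>x y. A x \<bullet> y = x \<bullet> A y"
  obtains v where "norm v = 1" "A v = lambda_min A *\<^sub>R v"
    and "\<And>y. lambda_min A * (norm y)\<^sup>2 \<le> y \<bullet> A y"
proof -
  obtain v m where v: "norm v = 1" "A v = m *\<^sub>R v"
    and bound: "\<And>y. m * (norm y)\<^sup>2 \<le> y \<bullet> A y"
    using selfadjoint_Rayleigh_minimum[OF lin sym] by blast
  have "lambda_min A = m"
    unfolding lambda_min_def
  proof (rule cInf_eq_minimum)
    show "m \<in> {l. \<exists>v. v \<noteq> 0 \<and> A v = l *\<^sub>R v}"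
      using v by (intro CollectI exI[of _ v]) auto
  next
    fix l
    assume "l \<in> {l. \<exists>v. v \<noteq> 0 \<and> A v = l *\<^sub>R v}"
    then obtain u where "u \<noteq> 0" "A u = l *\<^sub>R u"
      by blast
    then show "m \<le> l"
      using bound[of u] by (simp add: power2_norm_eq_inner)
  qed
  then show ?thesis
    using that v bound by simp
qed

lemma sym_posdef_inner_commute:
  assumes "sym_posdef K"
  shows "(K *v x) \<bullet> y = x \<bullet> (K *v y)"
  using assms dot_lmul_matrix[of x K y]
  by (metis sym_posdef_def transpose_matrix_vector)

lemma sym_posdef_coercive:
  assumes K: "sym_posdef K"
  obtains k where "0 < k" "\<And>x. k * (norm x)\<^sup>2 \<le> x \<bullet> (K *v x)"
proof -
  obtain v k where v: "norm v = 1" "K *v v = k *\<^sub>R v"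
    and bound: "\<And>x. k * (norm x)\<^sup>2 \<le> x \<bullet> (K *v x)"
    using selfadjoint_Rayleigh_minimum[OF matrix_vector_mul_linear sym_posdef_inner_commute[OF K]]
    by blast
  have "v \<noteq> 0"
    using v(1) by auto
  have "k = v \<bullet> (K *v v)"
    using v by (simp add: power2_norm_eq_inner[symmetric])
  also have "\<dots> > 0"
    using K \<open>v \<noteq> 0\<close> unfolding sym_posdef_def by blast
  finally show ?thesis
    using that bound by blast
qed

lemma bounded_linear_quadratic_form_le:
  fixes A :: "'a::real_inner \<Rightarrow> 'a"
  assumes "bounded_linear A"
  obtains B where "0 < B" "\<And>y. y \<bullet> A y \<le> B * (norm y)\<^sup>2"
proof -
  obtain B where "0 < B" and B: "\<And>y. norm (A y) \<le> norm y * B"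
    using bounded_linear.pos_bounded[OF assms] by blast
  moreover have "y \<bullet> A y \<le> B * (norm y)\<^sup>2" for y
  proof -
    have "y \<bullet> A y \<le> norm y * norm (A y)"
      by (rule norm_cauchy_schwarz)
    also have "\<dots> \<le> norm y * (norm y * B)"
      by (rule mult_left_mono[OF B norm_ge_zero])
    finally show ?thesis
      by (simp add: power2_eq_square algebra_simps)
  qed
  ultimately show ?thesis
    using that by blast
qed

lemma linear_Xmat: "linear (Xmat K1)"
  by (rule linearI) (auto simp: Xmat_def algebra_simps)

lemma Xmat_selfadjoint:
  assumes "sym_posdef K1"
  shows "Xmat K1 x \<bullet> y = x \<bullet> Xmat K1 y"
  by (cases x, cases y)
    (simp add: Xmat_def inner_add_left inner_add_right matrix_vector_mul_assoc[symmetric]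
      matrix_vector_mult_add_rdistrib sym_posdef_inner_commute[OF assms])

lemma inner_Xmat:
  assumes "sym_posdef K1"
  shows "y \<bullet> Xmat K1 y = (norm (fst y))\<^sup>2 + (norm (snd y + K1 *v fst y))\<^sup>2"
  by (cases y)
    (simp add: Xmat_def power2_norm_eq_inner inner_add_left inner_add_right
      matrix_vector_mul_assoc[symmetric] matrix_vector_mult_add_rdistrib
      sym_posdef_inner_commute[OF assms])

lemma lambda_min_Xmat:
  assumes K1: "sym_posdef K1"
  shows "0 < lambda_min (Xmat K1)" and "lambda_min (Xmat K1) * (norm y)\<^sup>2 \<le> y \<bullet> Xmat K1 y"
proof -
  obtain v where v: "norm v = 1" "Xmat K1 v = lambda_min (Xmat K1) *\<^sub>R v"
    and bound: "\<And>y. lambda_min (Xmat K1) * (norm y)\<^sup>2 \<le> y \<bullet> Xmat K1 y"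
    using lambda_min_Rayleigh[OF linear_Xmat Xmat_selfadjoint[OF K1]] by blast
  show "lambda_min (Xmat K1) * (norm y)\<^sup>2 \<le> y \<bullet> Xmat K1 y"
    by (rule bound)
  have "lambda_min (Xmat K1) = v \<bullet> Xmat K1 v"
    using v by (simp add: power2_norm_eq_inner[symmetric])
  also have "\<dots> > 0"
  proof -
    have "v \<noteq> 0"
      using v(1) by auto
    then have "fst v \<noteq> 0 \<or> snd v + K1 *v fst v \<noteq> 0"
      by (auto simp: prod_eq_iff)
    then show ?thesis
      unfolding inner_Xmat[OF K1] by (elim disjE) (auto intro: add_pos_nonneg add_nonneg_pos)
  qed
  finally show "0 < lambda_min (Xmat K1)" .
qed

lemma bounded_linear_Xmat: "bounded_linear (Xmat K1)"
  using linear_Xmat linear_conv_bounded_linear by blast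

definition closed_loop ::
    "real^3^3 \<Rightarrow> real^3^3 \<Rightarrow> (real^3) \<times> (real^3) \<Rightarrow> (real^3) \<times> (real^3)" where
  "closed_loop K1 K2 y = (snd y, - ((mat 1 + K2 ** K1) *v fst y) - ((K1 + K2) *v snd y))"

lemma controlled_field_eq_closed_loop:
  "(snd y, fa P mu rr rs t (fst y) + ctrl K1 K2 P mu rr rs t y) = closed_loop K1 K2 y"
  by (simp add: closed_loop_def ctrl_def)

lemma closed_loop_inner_Xmat:
  fixes y :: "(real^3) \<times> (real^3)"
  assumes K1: "sym_posdef K1"
  defines "s \<equiv> snd y + K1 *v fst y"
  shows "closed_loop K1 K2 y \<bullet> Xmat K1 y = - (fst y \<bullet> (K1 *v fst y)) - s \<bullet> (K2 *v s)"
proof -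
  have Xmat_eq: "Xmat K1 y = (fst y + K1 *v s, s)"
    by (simp add: Xmat_def s_def matrix_vector_right_distrib matrix_vector_mul_assoc
        matrix_vector_mult_add_rdistrib)
  have field_eq:
    "- ((mat 1 + K2 ** K1) *v fst y) - ((K1 + K2) *v snd y) = - fst y - K1 *v snd y - K2 *v s"
    by (simp add: s_def matrix_vector_right_distrib matrix_vector_mul_assoc
        matrix_vector_mult_add_rdistrib)
  have "(K1 *v snd y) \<bullet> s = snd y \<bullet> (K1 *v s)"
    by (rule sym_posdef_inner_commute[OF K1])
  moreover have "fst y \<bullet> s = fst y \<bullet> snd y + fst y \<bullet> (K1 *v fst y)"
    by (simp add: s_def inner_add_right)
  ultimately show ?thesis
    unfolding closed_loop_def Xmat_eq field_eq
    by (simp add: inner_add_left inner_add_right inner_diff_left inner_diff_right inner_minus_right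
        inner_commute)
qed

lemma closed_loop_dissipation:
  assumes K1: "sym_posdef K1"
    and c1: "\<And>x. c * (norm x)\<^sup>2 \<le> x \<bullet> (K1 *v x)"
    and c2: "\<And>x. c * (norm x)\<^sup>2 \<le> x \<bullet> (K2 *v x)"
  shows "closed_loop K1 K2 y \<bullet> Xmat K1 y \<le> - c * (y \<bullet> Xmat K1 y)"
  unfolding closed_loop_inner_Xmat[OF K1] inner_Xmat[OF K1]
  using c1[of "fst y"] c2[of "snd y + K1 *v fst y"] by (simp add: algebra_simps)

lemma has_real_derivative_selfadjoint_form:
  fixes A :: "'a::real_inner \<Rightarrow> 'a"
  assumes z: "(z has_vector_derivative z') (at t within S)"
    and A: "bounded_linear A" and sym: "\<And>x y. A x \<bullet> y = x \<bullet> A y"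
  shows "((\<lambda>s. z s \<bullet> A (z s)) has_real_derivative 2 * (z' \<bullet> A (z t))) (at t within S)"
proof -
  have "((\<lambda>s. z s \<bullet> A (z s)) has_derivative
      (\<lambda>h. z t \<bullet> A (h *\<^sub>R z') + (h *\<^sub>R z') \<bullet> A (z t))) (at t within S)"
    using z unfolding has_vector_derivative_def
    by (intro has_derivative_inner bounded_linear.has_derivative[OF A])
  moreover have
    "(\<lambda>h. z t \<bullet> A (h *\<^sub>R z') + (h *\<^sub>R z') \<bullet> A (z t)) = (*) (2 * (z' \<bullet> A (z t)))"
    using sym[of "z t" z']
    by (simp add: fun_eq_iff linear_scale[OF bounded_linear.linear[OF A]] inner_commute)
  ultimately show ?thesis
    unfolding has_field_derivative_def by simp
qed

lemma exp_decay_of_differential_inequality: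
  fixes V V' :: "real \<Rightarrow> real"
  assumes der: "\<And>s. s \<in> {0..T} \<Longrightarrow> (V has_real_derivative V' s) (at s within {0..T})"
    and ineq: "\<And>s. s \<in> {0..T} \<Longrightarrow> V' s \<le> - a * V s"
    and t: "t \<in> {0..T}"
  shows "V t \<le> V 0 * exp (- a * t)"
proof -
  define W where "W s = V s * exp (a * s)" for s
  have W': "(W has_real_derivative (V' s + a * V s) * exp (a * s)) (at s within {0..t})"
    if "s \<in> {0..t}" for s
  proof -
    have "(V has_real_derivative V' s) (at s within {0..t})"
      using der[of s] that t by (auto intro: DERIV_subset)
    then show ?thesis
      unfolding W_def by (auto intro!: derivative_eq_intros simp: algebra_simps)
  qed
  obtain x where x: "x \<in> {0..t}" and "W t - W 0 = (V' x + a * V x) * exp (a * x) * (t - 0)"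
    using mvt_very_simple[of 0 t W "\<lambda>x. (*) ((V' x + a * V x) * exp (a * x))"] W' t
    unfolding has_field_derivative_def by auto
  moreover have "(V' x + a * V x) * exp (a * x) * t \<le> 0"
    using ineq[of x] x t by (intro mult_nonpos_nonneg) auto
  ultimately have "V t * exp (a * t) \<le> V 0"
    by (simp add: W_def)
  then have "V t * exp (a * t) * exp (- a * t) \<le> V 0 * exp (- a * t)"
    by (rule mult_right_mono) simp
  then show ?thesis
    by (simp add: mult.assoc flip: exp_add)
qed

lemma closed_loop_Lyapunov_decay:
  assumes K1: "sym_posdef K1"
    and c1: "\<And>x. c * (norm x)\<^sup>2 \<le> x \<bullet> (K1 *v x)"
    and c2: "\<And>x. c * (norm x)\<^sup>2 \<le> x \<bullet> (K2 *v x)"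
    and z: "\<And>s. s \<in> {0..T} \<Longrightarrow>
      (z has_vector_derivative closed_loop K1 K2 (z s)) (at s within {0..T})"
    and t: "t \<in> {0..T}"
  shows "z t \<bullet> Xmat K1 (z t) \<le> z 0 \<bullet> Xmat K1 (z 0) * exp (- (2 * c) * t)"
proof (rule exp_decay_of_differential_inequality[OF _ _ t])
  fix s
  assume "s \<in> {0..T}"
  then show "((\<lambda>s. z s \<bullet> Xmat K1 (z s)) has_real_derivative
      2 * (closed_loop K1 K2 (z s) \<bullet> Xmat K1 (z s))) (at s within {0..T})"
    by (rule has_real_derivative_selfadjoint_form[OF z bounded_linear_Xmat Xmat_selfadjoint[OF K1]])
  show "2 * (closed_loop K1 K2 (z s) \<bullet> Xmat K1 (z s)) \<le> - (2 * c) * (z s \<bullet> Xmat K1 (z s))"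
    using closed_loop_dissipation[OF K1 c1 c2, of "z s"] by simp
qed

lemma closed_loop_Ell_invariant:
  assumes K1: "sym_posdef K1" and "0 \<le> c"
    and c1: "\<And>x. c * (norm x)\<^sup>2 \<le> x \<bullet> (K1 *v x)"
    and c2: "\<And>x. c * (norm x)\<^sup>2 \<le> x \<bullet> (K2 *v x)"
    and z: "\<And>s. s \<in> {0..T} \<Longrightarrow>
      (z has_vector_derivative closed_loop K1 K2 (z s)) (at s within {0..T})"
    and t: "t \<in> {0..T}" and z0: "z 0 \<in> Ell K1 r"
  shows "z t \<in> Ell K1 r"
proof -
  have "z t \<bullet> Xmat K1 (z t) \<le> z 0 \<bullet> Xmat K1 (z 0) * exp (- (2 * c) * t)"
    by (rule closed_loop_Lyapunov_decay[OF K1 c1 c2 z t])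
  also have "\<dots> \<le> z 0 \<bullet> Xmat K1 (z 0)"
    using \<open>0 \<le> c\<close> t inner_Xmat[OF K1, of "z 0"] by (intro mult_left_le) auto
  finally show ?thesis
    using z0 by (simp add: Ell_def)
qed

lemma closed_loop_exponential_decay:
  assumes K1: "sym_posdef K1"
    and c1: "\<And>x. c * (norm x)\<^sup>2 \<le> x \<bullet> (K1 *v x)"
    and c2: "\<And>x. c * (norm x)\<^sup>2 \<le> x \<bullet> (K2 *v x)"
    and "0 \<le> B" and B: "\<And>y. y \<bullet> Xmat K1 y \<le> B * (norm y)\<^sup>2"
    and z: "\<And>s. s \<in> {0..T} \<Longrightarrow>
      (z has_vector_derivative closed_loop K1 K2 (z s)) (at s within {0..T})"
    and t: "t \<in> {0..T}"
  shows "norm (z t) \<le> sqrt (B / lambda_min (Xmat K1)) * norm (z 0) * exp (- c * t)"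
proof -
  define l where "l = lambda_min (Xmat K1)"
  have l: "0 < l"
    unfolding l_def by (rule lambda_min_Xmat(1)[OF K1])
  have "l * (norm (z t))\<^sup>2 \<le> z t \<bullet> Xmat K1 (z t)"
    unfolding l_def by (rule lambda_min_Xmat(2)[OF K1])
  also have "\<dots> \<le> z 0 \<bullet> Xmat K1 (z 0) * exp (- (2 * c) * t)"
    by (rule closed_loop_Lyapunov_decay[OF K1 c1 c2 z t])
  also have "\<dots> \<le> B * (norm (z 0))\<^sup>2 * exp (- (2 * c) * t)"
    by (intro mult_right_mono B) simp
  also have "\<dots> = l * (sqrt (B / l) * norm (z 0) * exp (- c * t))\<^sup>2"
    using l \<open>0 \<le> B\<close> by (simp add: power_mult_distrib flip: exp_of_nat_mult)
  finally have "(norm (z t))\<^sup>2 \<le> (sqrt (B / l) * norm (z 0) * exp (- c * t))\<^sup>2"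
    using l by simp
  then show ?thesis
    unfolding l_def[symmetric] by (rule power2_le_imp_le) (use l \<open>0 \<le> B\<close> in simp)
qed

lemma rmin_le_norm_wv:
  assumes "j \<in> {1..P}" "t \<in> {0..ts}"
  shows "rmin P rr rs ts \<le> norm (wv rr rs j t)"
  unfolding rmin_def using assms by (intro cInf_lower bdd_belowI[of _ 0]) auto

lemma rmin_nonneg:
  assumes "1 \<le> P" "0 \<le> ts"
  shows "0 \<le> rmin P rr rs ts"
  unfolding rmin_def using assms by (intro cInf_greatest) auto

lemma norm_less_of_mem_Ell:
  assumes K1: "sym_posdef K1" and "0 \<le> r" and y: "y \<in> Ell K1 r"
  shows "norm y < r"
proof -
  have "lambda_min (Xmat K1) * (norm y)\<^sup>2 < lambda_min (Xmat K1) * r\<^sup>2"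
    using y lambda_min_Xmat(2)[OF K1, of y] unfolding Ell_def by simp
  then have "(norm y)\<^sup>2 < r\<^sup>2"
    using lambda_min_Xmat(1)[OF K1] by simp
  then show ?thesis
    using \<open>0 \<le> r\<close> by (rule power2_less_imp_less)
qed

lemma Ell_subset_Dom:
  assumes K1: "sym_posdef K1" and "1 \<le> P" and t: "t \<in> {0..ts}"
  shows "Ell K1 (rmin P rr rs ts) \<subseteq> Dom P rr rs t"
proof
  fix y
  assume y: "y \<in> Ell K1 (rmin P rr rs ts)"
  have "0 \<le> ts"
    using t by simp
  then have "norm y < rmin P rr rs ts"
    using norm_less_of_mem_Ell[OF K1 rmin_nonneg[OF \<open>1 \<le> P\<close>] y] by blast
  moreover have "norm (fst y) \<le> norm y"
    by (cases y) (simp add: norm_fst_le)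
  ultimately have "norm (fst y) < rmin P rr rs ts"
    by linarith
  then have "fst y \<noteq> wv rr rs j t" if "j \<in> {1..P}" for j
    using rmin_le_norm_wv[OF that t, of rr rs] by auto
  then show "y \<in> Dom P rr rs t"
    unfolding Dom_def by (cases y) auto
qed

theorem corollary1:
  fixes K1 K2 :: "real^3^3"
  assumes "sym_posdef K1" and "sym_posdef K2"
  shows "\<exists>c1>0. \<exists>c2>0. \<forall>(P::nat) (mu::nat \<Rightarrow> real) (rr::nat \<Rightarrow> real \<Rightarrow> real^3)
            (rs::real \<Rightarrow> real^3) (ts::real).
     P \<ge> 1 \<and> (\<forall>j\<in>{1..P}. mu j > 0) \<and> (\<forall>j\<in>{1..P}. C1_on {0..} (rr j))
     \<and> (\<forall>t\<ge>0. rr 1 t = 0) \<and> C1_on {0..} rs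
     \<and> (\<forall>t\<ge>0. \<forall>j\<in>{1..P}. rs t \<noteq> rr j t) \<and> ts > 0
     \<longrightarrow>
       (\<forall>t\<in>{0..ts}. Ell K1 (rmin P rr rs ts) \<subseteq> Dom P rr rs t)
     \<and> (\<forall>(T::real) (z::real \<Rightarrow> (real^3) \<times> (real^3)).
          0 \<le> T \<and> T \<le> ts \<and> z 0 \<in> Ell K1 (rmin P rr rs ts)
          \<and> (\<forall>t\<in>{0..T}. z t \<in> Dom P rr rs t)
          \<and> (\<forall>t\<in>{0..T}. (z has_vector_derivative
                 (snd (z t), fa P mu rr rs t (fst (z t)) + ctrl K1 K2 P mu rr rs t (z t)))
                 (at t within {0..T}))
          \<longrightarrow> (\<forall>t\<in>{0..T}. z t \<in> Ell K1 (rmin P rr rs ts)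
                  \<and> norm (z t) \<le> c1 * norm (z 0) * exp (- c2 * t)))"
proof -
  obtain k1 k2 where k1: "0 < k1" "\<And>x. k1 * (norm x)\<^sup>2 \<le> x \<bullet> (K1 *v x)"
    and k2: "0 < k2" "\<And>x. k2 * (norm x)\<^sup>2 \<le> x \<bullet> (K2 *v x)"
    by (metis sym_posdef_coercive assms)
  define c where "c = min k1 k2"
  have "0 < c" "c \<le> k1" "c \<le> k2"
    using k1 k2 by (auto simp: c_def)
  have c1: "c * (norm x)\<^sup>2 \<le> x \<bullet> (K1 *v x)"
    and c2: "c * (norm x)\<^sup>2 \<le> x \<bullet> (K2 *v x)" for x
    by (rule order_trans[OF mult_right_mono[OF \<open>c \<le> k1\<close> zero_le_power2] k1(2)],
        rule order_trans[OF mult_right_mono[OF \<open>c \<le> k2\<close> zero_le_power2] k2(2)])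
  obtain B where B: "0 < B" "\<And>y. y \<bullet> Xmat K1 y \<le> B * (norm y)\<^sup>2"
    using bounded_linear_quadratic_form_le[OF bounded_linear_Xmat] by blast
  have "0 < sqrt (B / lambda_min (Xmat K1))"
    using B lambda_min_Xmat(1)[OF assms(1)] by simp
  show ?thesis
  proof (rule exI[of _ "sqrt (B / lambda_min (Xmat K1))"], intro conjI exI[of _ c] allI impI ballI,
      goal_cases)
    case (3 P mu rr rs ts t)
    then show ?case
      using Ell_subset_Dom[OF assms(1)] by blast
  next
    case (4 P mu rr rs ts T z t)
    then show ?case
      using closed_loop_Ell_invariant[OF assms(1) less_imp_le[OF \<open>0 < c\<close>] c1 c2]
      unfolding controlled_field_eq_closed_loop by blast
  next
    case (5 P mu rr rs ts T z t)
    then show ?case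
      using closed_loop_exponential_decay[OF assms(1) c1 c2 less_imp_le[OF B(1)] B(2)]
      unfolding controlled_field_eq_closed_loop by blast
  qed fact+
qed

end
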